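(* Let $T_1,\dots,T_n$ be triangles in $E$, let $S$ be the set of vertices of $\bigcap_{i=1}^nT_i$, let $0<\epsilon<1$, and let $P$ be the convex hull of all vertices of $T_1^{(1-\epsilon)},\dots,T_n^{(1-\epsilon)}$. Then $(P,S)$ is a NO instance of the intermediate polygon problem, i.e. there is no triangle $T$ with $S\subseteq T\subseteq P$.
   Context: For $d>0$ let $C_d=\{(x,y)\in\mathbb{R}^2: x^2+y^2\le d\}$, and $C=C_1$. $E$ is the set of all equilateral triangles $T\subseteq C$ whose vertices lie on the boundary of $C$. For $T\in E$, $T^{(1-\epsilon)}$ denotes the scaling of $T$ about the origin such that the vertices of $T^{(1-\epsilon)}$ lie on the boundary of $C_{1-\epsilon}$. An instance of the intermediate polygon problem is a polygon $P\subseteq\mathbb{R}^2$ and a finite point set $S$; it is a YES instance if there is a triangle $T$ with $S\subseteq T\subseteq P$, and a NO instance otherwise. *)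

theory Defs
  imports "HOL-Analysis.Analysis"
begin

type_synonym pt = "real ^ 2"

definition disk :: "real \<Rightarrow> pt set" where
  "disk d = {p. (p $ 1)^2 + (p $ 2)^2 \<le> d}"

definition is_triangle :: "pt set \<Rightarrow> bool" where
  "is_triangle T \<longleftrightarrow> (\<exists>a b c. \<not> collinear {a, b, c} \<and> T = convex hull {a, b, c})"

definition vertices :: "pt set \<Rightarrow> pt set" where
  "vertices K = {v. v extreme_point_of K}"

definition E_tri :: "pt set set" where
  "E_tri = {T. \<exists>a b c. T = convex hull {a, b, c} \<and> T \<subseteq> disk 1 \<and>
      a \<in> frontier (disk 1) \<and> b \<in> frontier (disk 1) \<and> c \<in> frontier (disk 1) \<and>
      a \<noteq> b \<and> dist a b = dist b c \<and> dist b c = dist c a}"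

text \<open>T^(1-eps): scaling of T about the origin so that its vertices lie on the
  boundary of C_(1-eps), i.e. scaling by the factor sqrt(1-eps).\<close>
definition scaled_tri :: "real \<Rightarrow> pt set \<Rightarrow> pt set" where
  "scaled_tri eps T = (\<lambda>x. sqrt (1 - eps) *\<^sub>R x) ` T"

definition ipp_yes :: "pt set \<Rightarrow> pt set \<Rightarrow> bool" where
  "ipp_yes P S \<longleftrightarrow> (\<exists>T. is_triangle T \<and> S \<subseteq> T \<and> T \<subseteq> P)"

end

theory Submission
  imports Defs
begin

text \<open>Every triangle of E contains the disk of radius 1/2 about the origin (its incircle), hence
  so does the compact convex intersection K, and a triangle containing the extreme points of K
  contains K. But a triangle whose vertices lie in the open unit disk, as the vertices of any
  triangle inside P do, cannot contain that disk: for every unit vector u some vertex v has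
  u \<bullet> v \<ge> 1/2, and since norm v < 1 the directions u served by one vertex form a closed arc
  of length less than 2pi/3. Three such arcs cannot cover the circle; this is made rigorous by
  connectedness of the line of angles, since no arc contains two of the angles t, t + 2pi/3,
  t + 4pi/3, which forces the arcs to be pairwise disjoint.\<close>

lemma inner_vec2: "(x::real^2) \<bullet> y = x$1 * y$1 + x$2 * y$2"
  by (simp add: inner_vec_def sum_2)

lemma disk_eq_cball: "disk d = cball 0 (sqrt d)"
proof (rule set_eqI)
  fix p :: pt
  have "(p$1)^2 + (p$2)^2 = (norm p)^2"
    unfolding power2_norm_eq_inner inner_vec2 by (simp add: power2_eq_square)
  moreover have "(norm p)^2 \<le> d \<longleftrightarrow> norm p \<le> sqrt d"
    by (metis real_le_rsqrt sqrt_ge_absD abs_norm_cancel)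
  ultimately show "p \<in> disk d \<longleftrightarrow> p \<in> cball 0 (sqrt d)"
    by (simp add: disk_def)
qed

lemma orthogonal_to_independent_pair_eq_0:
  fixes a b y :: "real^2"
  assumes "(a \<bullet> b)^2 < (a \<bullet> a) * (b \<bullet> b)" and "y \<bullet> a = 0" and "y \<bullet> b = 0"
  shows "y = 0"
proof -
  define D where "D = a$1 * b$2 - a$2 * b$1"
  have "D^2 = (a \<bullet> a) * (b \<bullet> b) - (a \<bullet> b)^2"
    unfolding D_def inner_vec2 by algebra
  then have "D \<noteq> 0" using assms(1) by auto
  moreover have "y$1 * D = b$2 * (y \<bullet> a) - a$2 * (y \<bullet> b)" "y$2 * D = a$1 * (y \<bullet> b) - b$1 * (y \<bullet> a)"
    unfolding D_def inner_vec2 by algebra+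
  ultimately show ?thesis
    using assms(2,3) by (simp add: vec_eq_iff forall_2)
qed

lemma equilateral_unit_inner_eq:
  fixes a b c :: "real^2"
  assumes unit: "norm a = 1" "norm b = 1" "norm c = 1" and "a \<noteq> b"
    and "dist a b = dist b c" "dist b c = dist c a"
  shows "a \<bullet> b = -1/2" "b \<bullet> c = -1/2" "c \<bullet> a = -1/2"
proof -
  have aa: "a \<bullet> a = 1" and bb: "b \<bullet> b = 1" and cc: "c \<bullet> c = 1"
    using unit by (simp_all add: norm_eq_1)
  have dist_sq: "(dist x y)^2 = x \<bullet> x + y \<bullet> y - 2 * (x \<bullet> y)" for x y :: "real^2"
    unfolding dist_norm power2_norm_eq_inner by (simp add: inner_diff_left inner_diff_right inner_commute)
  define t where "t = a \<bullet> b"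
  have bc: "b \<bullet> c = t" and ca: "c \<bullet> a = t"
    using dist_sq[of a b] dist_sq[of b c] dist_sq[of c a] assms(5,6) aa bb cc
    unfolding t_def by (simp_all add: inner_commute)
  have ba: "b \<bullet> a = t" and cb: "c \<bullet> b = t" and ac: "a \<bullet> c = t"
    using bc ca by (simp_all add: inner_commute t_def)
  note inner = aa bb cc bc ca ba cb ac t_def[symmetric] inner_add_left inner_add_right inner_diff_left inner_diff_right
  have "0 < (dist a b)^2" using \<open>a \<noteq> b\<close> by simp
  then have "t < 1" using dist_sq[of a b] aa bb unfolding t_def by simp
  txt \<open>In the plane the nonzero vector a - b cannot be orthogonal to both c and a + b
    unless these are parallel; this forces t \<le> -1/2.\<close>
  have "\<not> (c \<bullet> (a + b))^2 < (c \<bullet> c) * ((a + b) \<bullet> (a + b))"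
  proof
    assume "(c \<bullet> (a + b))^2 < (c \<bullet> c) * ((a + b) \<bullet> (a + b))"
    moreover have "(a - b) \<bullet> c = 0" "(a - b) \<bullet> (a + b) = 0"
      by (simp_all add: inner)
    ultimately have "a - b = 0" by (rule orthogonal_to_independent_pair_eq_0)
    with \<open>a \<noteq> b\<close> show False by simp
  qed
  then have "(2 * t)^2 \<ge> 2 + 2 * t"
    by (simp add: inner)
  then have "(2 * t + 1) * (t - 1) \<ge> 0" by (simp add: power2_eq_square algebra_simps)
  with \<open>t < 1\<close> have "t \<le> -1/2" by (auto simp: zero_le_mult_iff)
  moreover have "0 \<le> (a + b + c) \<bullet> (a + b + c)" by simp
  then have "t \<ge> -1/2"
    by (simp add: inner)
  ultimately have "t = -1/2" by simp
  with bc ca show "a \<bullet> b = -1/2" "b \<bullet> c = -1/2" "c \<bullet> a = -1/2" by (simp_all add: t_def)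
qed

lemma half_disk_subset_equilateral:
  fixes a b c :: "real^2"
  assumes unit: "norm a = 1" "norm b = 1" "norm c = 1"
    and ab: "a \<bullet> b = -1/2" and bc: "b \<bullet> c = -1/2" and ca: "c \<bullet> a = -1/2"
  shows "cball 0 (1/2) \<subseteq> convex hull {a, b, c}"
proof
  fix x :: "real^2"
  assume "x \<in> cball 0 (1/2)"
  then have small: "\<bar>x \<bullet> v\<bar> \<le> 1/2" if "norm v = 1" for v
    using Cauchy_Schwarz_ineq2[of x v] that by simp
  have aa: "a \<bullet> a = 1" and bb: "b \<bullet> b = 1" and cc: "c \<bullet> c = 1"
    using unit by (simp_all add: norm_eq_1)
  have ba: "b \<bullet> a = -1/2" and cb: "c \<bullet> b = -1/2" and ac: "a \<bullet> c = -1/2"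
    using ab bc ca by (simp_all add: inner_commute)
  note inner = aa bb cc ab bc ca ba cb ac inner_add_left inner_add_right inner_diff_left
    inner_diff_right
  have "(a + b + c) \<bullet> (a + b + c) = 0" by (simp add: inner)
  then have "x \<bullet> a + x \<bullet> b + x \<bullet> c = 0"
    by (metis inner_eq_zero_iff inner_add_right inner_zero_right)
  txt \<open>Barycentric coordinates of x: a, b, c form a tight frame, so that
    (x \<bullet> a) a + (x \<bullet> b) b + (x \<bullet> c) c = (3/2) x.\<close>
  define w where "w v = 1/3 + 2/3 * (x \<bullet> v)" for v
  define y where "y = w a *\<^sub>R a + w b *\<^sub>R b + w c *\<^sub>R c - x"
  have "(a \<bullet> b)^2 < (a \<bullet> a) * (b \<bullet> b)" by (simp add: ab aa bb power2_eq_square)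
  moreover have "y \<bullet> a = 0" "y \<bullet> b = 0"
    using \<open>x \<bullet> a + x \<bullet> b + x \<bullet> c = 0\<close>
    by (simp_all add: y_def w_def inner inner_commute[of x] algebra_simps)
  ultimately have "y = 0" by (rule orthogonal_to_independent_pair_eq_0)
  then have "x = w a *\<^sub>R a + w b *\<^sub>R b + w c *\<^sub>R c" by (simp add: y_def)
  moreover have "w a \<ge> 0" "w b \<ge> 0" "w c \<ge> 0"
    using small[OF unit(1)] small[OF unit(2)] small[OF unit(3)] unfolding w_def
    by (simp_all add: abs_le_iff)
  moreover have "w a + w b + w c = 1"
    using \<open>x \<bullet> a + x \<bullet> b + x \<bullet> c = 0\<close> by (simp add: w_def)
  ultimately show "x \<in> convex hull {a, b, c}"
    unfolding convex_hull_3 by blast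
qed

lemma convex_hull_inner_le_member:
  assumes "x \<in> convex hull S"
  obtains v where "v \<in> S" "u \<bullet> x \<le> u \<bullet> v"
proof (rule ccontr)
  assume "\<not> thesis"
  with that have "S \<subseteq> {y. u \<bullet> y < u \<bullet> x}" by force
  then have "convex hull S \<subseteq> {y. u \<bullet> y < u \<bullet> x}"
    by (rule hull_minimal) (rule convex_halfspace_lt)
  with assms show False by auto
qed

lemma inner_gt_neg_half_if_common_cap:
  fixes u v x :: "'a::real_inner"
  assumes "norm u = 1" "norm v = 1" "norm x < 1" "u \<bullet> x \<ge> 1/2" "v \<bullet> x \<ge> 1/2"
  shows "u \<bullet> v > -1/2"
proof -
  have "1 \<le> (u + v) \<bullet> x" using assms(4,5) by (simp add: inner_add_left)
  also have "\<dots> \<le> norm (u + v) * norm x" by (rule norm_cauchy_schwarz)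
  finally have "1 < norm (u + v)"
  proof (rule contrapos_pp)
    assume "\<not> 1 < norm (u + v)"
    then have "norm (u + v) * norm x \<le> 1 * norm x" by (intro mult_right_mono) auto
    with \<open>norm x < 1\<close> show "\<not> 1 \<le> norm (u + v) * norm x" by simp
  qed
  then have "1 < (norm (u + v))^2" by (simp add: one_less_power)
  then have "1 < (u + v) \<bullet> (u + v)" by (simp add: power2_norm_eq_inner)
  moreover have "u \<bullet> u = 1" "v \<bullet> v = 1" using assms(1,2) by (simp_all add: norm_eq_1)
  ultimately show ?thesis by (simp add: inner_add_left inner_add_right inner_commute)
qed

lemma closed_3_cover_meets_shift:
  fixes A B C :: "real set"
  assumes "closed A" "closed B" "closed C" and cover: "A \<union> B \<union> C = UNIV"
  obtains X t where "X \<in> {A, B, C}" "t \<in> X" "t + p \<in> X \<or> t + 2 * p \<in> X"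
proof (rule ccontr)
  note meets = that
  assume "\<not> thesis"
  then have apart: "t + p \<notin> X" "t + 2 * p \<notin> X" if "X \<in> {A, B, C}" "t \<in> X" for X t
    using meets[OF that] by blast+
  txt \<open>A point lying in two of the sets would force both t + p and t + 2p into the third.\<close>
  have disjoint: "X \<inter> Y = {}"
    if XYZ: "X \<in> {A, B, C}" "Y \<in> {A, B, C}" "Z \<in> {A, B, C}" and "X \<union> Y \<union> Z = UNIV" for X Y Z
  proof -
    have False if "t \<in> X" "t \<in> Y" for t
    proof -
      have "t + p \<in> Z" "t + 2 * p \<in> Z"
        using apart[OF XYZ(1) \<open>t \<in> X\<close>] apart[OF XYZ(2) \<open>t \<in> Y\<close>] \<open>X \<union> Y \<union> Z = UNIV\<close>
        by blast+
      with apart(1)[OF XYZ(3), of "t + p"] show False by (simp add: algebra_simps)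
    qed
    then show ?thesis by blast
  qed
  have "A \<inter> (B \<union> C) = {}" "B \<inter> C = {}"
    using disjoint[of A B C] disjoint[of A C B] disjoint[of B C A] cover by auto
  moreover have split: "X = {} \<or> Y = {}"
    if "closed X" "closed Y" "X \<union> Y = UNIV" "X \<inter> Y = {}" for X Y :: "real set"
    using connected_UNIV[unfolded connected_closed] that by auto
  ultimately have "A = {} \<or> B \<union> C = {}" "A = {} \<Longrightarrow> B = {} \<or> C = {}"
    using split[of A "B \<union> C"] split[of B C] assms by (auto simp: Un_assoc)
  then have "A = UNIV \<or> B = UNIV \<or> C = UNIV"
    using cover by auto
  then show False using apart(1)[of _ 0] by auto
qed

definition unit_vec :: "real \<Rightarrow> real^2" where
  "unit_vec t = vector [cos t, sin t]"

lemma inner_unit_vec: "unit_vec s \<bullet> unit_vec t = cos (s - t)"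
  by (simp add: unit_vec_def inner_vec2 cos_diff)

lemma norm_unit_vec: "norm (unit_vec t) = 1"
  using inner_unit_vec[of t t] by (simp add: norm_eq_1)

lemma half_disk_not_subset_small_triangle:
  fixes a b c :: "real^2"
  assumes "norm a < 1" "norm b < 1" "norm c < 1"
  shows "\<not> cball 0 (1/2) \<subseteq> convex hull {a, b, c}"
proof
  assume half_disk: "cball 0 (1/2) \<subseteq> convex hull {a, b, c}"
  define cap where "cap v = {t. 1/2 \<le> unit_vec t \<bullet> v}" for v
  have closed_cap: "closed (cap v)" for v
  proof -
    have "cap v = {t. 1/2 \<le> cos t * v$1 + sin t * v$2}"
      by (simp add: cap_def unit_vec_def inner_vec2)
    then show ?thesis by (simp add: closed_Collect_le continuous_intros)
  qed
  have cover: "cap a \<union> cap b \<union> cap c = UNIV"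
  proof -
    have "t \<in> cap a \<union> cap b \<union> cap c" for t
    proof -
      have "(1/2) *\<^sub>R unit_vec t \<in> convex hull {a, b, c}"
        using half_disk norm_unit_vec[of t] by auto
      then obtain v where "v \<in> {a, b, c}" "unit_vec t \<bullet> ((1/2) *\<^sub>R unit_vec t) \<le> unit_vec t \<bullet> v"
        by (rule convex_hull_inner_le_member)
      then show ?thesis using norm_unit_vec[of t] by (auto simp: cap_def norm_eq_1)
    qed
    then show ?thesis by blast
  qed
  obtain X t where X: "X \<in> {cap a, cap b, cap c}" "t \<in> X"
    and shifted: "t + 2*pi/3 \<in> X \<or> t + 2 * (2*pi/3) \<in> X"
    by (rule closed_3_cover_meets_shift[OF closed_cap closed_cap closed_cap cover])
  have cos1: "cos (t - (t + 2*pi/3)) = -1/2" using cos_120 by simp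
  have cos2: "cos (t - (t + 2 * (2*pi/3))) = -1/2"
    using cos_120 cos_periodic[of "-(2*pi/3)"] by (simp add: algebra_simps)
  obtain s where "s \<in> X" "cos (t - s) = -1/2"
    using shifted
  proof
    assume "t + 2*pi/3 \<in> X"
    then show thesis by (rule that[OF _ cos1])
  next
    assume "t + 2 * (2*pi/3) \<in> X"
    then show thesis by (rule that[OF _ cos2])
  qed
  obtain v where "v \<in> {a, b, c}" "X = cap v" using X(1) by blast
  with assms have "norm v < 1" by auto
  moreover have "unit_vec t \<bullet> v \<ge> 1/2" "unit_vec s \<bullet> v \<ge> 1/2"
    using \<open>t \<in> X\<close> \<open>s \<in> X\<close> \<open>X = cap v\<close> by (simp_all add: cap_def)
  ultimately have "unit_vec t \<bullet> unit_vec s > -1/2"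
    by (intro inner_gt_neg_half_if_common_cap norm_unit_vec)
  with \<open>cos (t - s) = -1/2\<close> show False by (simp add: inner_unit_vec)
qed

lemma
  assumes "T \<in> E_tri"
  shows E_tri_subset_cball: "T \<subseteq> cball 0 1"
    and half_disk_subset_E_tri: "cball 0 (1/2) \<subseteq> T"
    and compact_E_tri: "compact T"
    and convex_E_tri: "convex T"
proof -
  obtain a b c where T: "T = convex hull {a, b, c}" "T \<subseteq> cball 0 1"
      and unit: "norm a = 1" "norm b = 1" "norm c = 1"
      and equilateral: "a \<noteq> b" "dist a b = dist b c" "dist b c = dist c a"
    using assms by (auto simp: E_tri_def disk_eq_cball)
  show "T \<subseteq> cball 0 1" by (fact T(2))
  show "cball 0 (1/2) \<subseteq> T"
    unfolding T(1) using equilateral_unit_inner_eq[OF unit equilateral]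
    by (intro half_disk_subset_equilateral unit)
  show "compact T" "convex T"
    unfolding T(1) by (simp_all add: finite_imp_compact_convex_hull convex_convex_hull)
qed

lemma compact_convex_subset_if_vertices_subset:
  assumes "compact K" "convex K" "convex T" "vertices K \<subseteq> T"
  shows "K \<subseteq> T"
proof -
  have "convex hull (vertices K) \<subseteq> T" using assms(3,4) by (simp add: hull_minimal)
  then show ?thesis
    using Krein_Milman_Minkowski[OF assms(1,2)] by (simp add: vertices_def)
qed

lemma vertices_scaled_tri_subset_cball:
  assumes "T \<subseteq> cball 0 1" "eps \<le> 1"
  shows "vertices (scaled_tri eps T) \<subseteq> cball 0 (sqrt (1 - eps))"
proof
  fix x assume "x \<in> vertices (scaled_tri eps T)"
  then obtain y where "y \<in> T" "x = sqrt (1 - eps) *\<^sub>R y"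
    by (auto simp: vertices_def extreme_point_of_def scaled_tri_def)
  with assms show "x \<in> cball 0 (sqrt (1 - eps))"
    by (auto simp: mult_left_le)
qed

theorem mainTheorem13:
  fixes n :: nat and Tr :: "nat \<Rightarrow> pt set" and eps :: real
  assumes "n \<ge> 1"
    and "\<And>i. i \<in> {1..n} \<Longrightarrow> Tr i \<in> E_tri"
    and "0 < eps" and "eps < 1"
  shows "\<not> ipp_yes
           (convex hull (\<Union>i\<in>{1..n}. vertices (scaled_tri eps (Tr i))))
           (vertices (\<Inter>i\<in>{1..n}. Tr i))"
proof
  define P where "P = convex hull (\<Union>i\<in>{1..n}. vertices (scaled_tri eps (Tr i)))"
  define K where "K = (\<Inter>i\<in>{1..n}. Tr i)"
  assume "ipp_yes P (vertices K)"
  then obtain a b c where abc: "vertices K \<subseteq> convex hull {a, b, c}" "convex hull {a, b, c} \<subseteq> P"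
    by (auto simp: ipp_yes_def is_triangle_def)
  have "compact K"
    unfolding K_def using assms(1,2) by (intro compact_Inter) (auto intro: compact_E_tri)
  moreover have "convex K"
    unfolding K_def using assms(2) by (intro convex_INT) (auto intro: convex_E_tri)
  ultimately have "K \<subseteq> convex hull {a, b, c}"
    using abc(1) by (simp add: compact_convex_subset_if_vertices_subset convex_convex_hull)
  moreover have "cball 0 (1/2) \<subseteq> K"
    unfolding K_def using assms(2) by (intro INT_greatest) (simp add: half_disk_subset_E_tri)
  ultimately have half_disk: "cball 0 (1/2) \<subseteq> convex hull {a, b, c}" by blast
  have P_small: "P \<subseteq> cball 0 (sqrt (1 - eps))"
    unfolding P_def using vertices_scaled_tri_subset_cball[OF E_tri_subset_cball[OF assms(2)]] assms(4)
    by (intro hull_minimal) (auto simp: UN_subset_iff)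
  have "norm v < 1" if "v \<in> {a, b, c}" for v
  proof -
    have "v \<in> cball 0 (sqrt (1 - eps))"
      using abc(2) hull_inc[OF that, of convex] P_small by blast
    then have "norm v \<le> sqrt (1 - eps)" by simp
    moreover have "sqrt (1 - eps) < 1" using assms(3) by simp
    ultimately show ?thesis by linarith
  qed
  with half_disk show False
    using half_disk_not_subset_small_triangle by blast
qed

end
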